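(* Let $E_{\mathcal H}>1$ be a fixed real number. Each of the following kernels satisfies assumptions (K0), (K1), (K2), (K3): (a) the Gaussian kernel $K(x)=e^{-x^2/2}/\sqrt{2\pi}$; (b) the rectangular kernel $K(x)=\mathbf 1_{[-1,1]}(x)/2$; (c) the Epanechnikov kernel $K(x)=(3/4)(1-x^2)\mathbf 1_{[-1,1]}(x)$; (d) the biweight kernel $K(x)=(15/16)(1-x^2)^2\mathbf 1_{[-1,1]}(x)$.
   Context: $\|\cdot\|$ and $\langle\cdot,\cdot\rangle$ denote the $L^2(\mathbb R)$ norm and inner product with respect to Lebesgue measure; $K(x\,\cdot)$ denotes $u\mapsto K(xu)$. For $x>0$ define $\phi(x)=1+\frac1x-2\frac{\langle K,K(x\,\cdot)\rangle}{\|K\|^2}$ (equivalently $\phi(x)=\|K\|^{-2}\|K-K_x\|^2$ with $K_x=K(\cdot/x)/x$). The assumptions are: (K0) $\int|K|=1$, $\|K\|<\infty$, and $\langle K,K(x\,\cdot)\rangle/\|K\|^2\ge1$ for all $0\le x\le1$; (K1) the function $\phi$ is bounded from below over $[E_{\mathcal H},+\infty)$; (K2) for every $0<\mu<1$, the function $x\mapsto\phi(x)-\mu/x$ tends to $+\infty$ as $x\to0$ and is decreasing in some neighborhood of $0$; (K3) for every $0<\mu<1$, the function $x\mapsto\phi(x)+\mu/x$ is increasing on $[2,\infty)$. *)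

theory Defs
  imports "HOL-Analysis.Analysis"
begin

definition L2_inner :: "(real \<Rightarrow> real) \<Rightarrow> (real \<Rightarrow> real) \<Rightarrow> real" where
  "L2_inner f g = (\<integral>u. f u * g u \<partial>lborel)"

definition L2_normsq :: "(real \<Rightarrow> real) \<Rightarrow> real" where
  "L2_normsq f = (\<integral>u. (f u)\<^sup>2 \<partial>lborel)"

definition kphi :: "(real \<Rightarrow> real) \<Rightarrow> real \<Rightarrow> real" where
  "kphi K x = 1 + 1 / x - 2 * L2_inner K (\<lambda>u. K (x * u)) / L2_normsq K"

definition K0 :: "(real \<Rightarrow> real) \<Rightarrow> bool" where
  "K0 K \<longleftrightarrow> integrable lborel K \<and> (\<integral>u. \<bar>K u\<bar> \<partial>lborel) = 1
      \<and> integrable lborel (\<lambda>u. (K u)\<^sup>2)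
      \<and> (\<forall>x. 0 \<le> x \<and> x \<le> 1 \<longrightarrow> L2_inner K (\<lambda>u. K (x * u)) / L2_normsq K \<ge> 1)"

definition K1 :: "real \<Rightarrow> (real \<Rightarrow> real) \<Rightarrow> bool" where
  "K1 EH K \<longleftrightarrow> (\<exists>B. \<forall>x\<ge>EH. B \<le> kphi K x)"

definition K2 :: "(real \<Rightarrow> real) \<Rightarrow> bool" where
  "K2 K \<longleftrightarrow> (\<forall>\<mu>. 0 < \<mu> \<and> \<mu> < 1 \<longrightarrow>
      filterlim (\<lambda>x. kphi K x - \<mu> / x) at_top (at_right 0)
      \<and> (\<exists>\<delta>>0. antimono_on {0<..<\<delta>} (\<lambda>x. kphi K x - \<mu> / x)))"

definition K3 :: "(real \<Rightarrow> real) \<Rightarrow> bool" where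
  "K3 K \<longleftrightarrow> (\<forall>\<mu>. 0 < \<mu> \<and> \<mu> < 1 \<longrightarrow> mono_on {2..} (\<lambda>x. kphi K x + \<mu> / x))"

definition kernel_assumptions :: "real \<Rightarrow> (real \<Rightarrow> real) \<Rightarrow> bool" where
  "kernel_assumptions EH K \<longleftrightarrow> K0 K \<and> K1 EH K \<and> K2 K \<and> K3 K"

end

theory Submission
  imports Defs "HOL-Probability.Probability"
begin

text \<open>
  Write \<open>\<rho>(x) = \<langle>K, K(x\<cdot>)\<rangle> / \<parallel>K\<parallel>\<^sup>2\<close>, so that \<open>\<phi>(x) = 1 + 1/x - 2\<rho>(x)\<close>.
  Then (K1) only needs \<open>\<rho>\<close> to be bounded, (K2) follows as soon as \<open>\<rho>'\<close> is bounded below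
  near \<open>0\<close> (the term \<open>-(1-\<mu>)/x\<^sup>2\<close> then dominates the derivative of \<open>\<phi>(x) - \<mu>/x\<close>), and
  (K3) follows from \<open>x\<^sup>2\<rho>'(x) \<le> -1\<close> on \<open>[2,\<infinity>)\<close>, which makes the derivative of
  \<open>\<phi>(x) + \<mu>/x\<close> nonnegative. For the Gaussian kernel \<open>\<rho>(x) = \<surd>2/\<surd>(1+x\<^sup>2)\<close>. For a
  kernel \<open>K = p\<close> on \<open>[-1,1]\<close> and \<open>0\<close> elsewhere, with \<open>p\<close> a polynomial, the product
  \<open>K(u)K(xu)\<close> is supported on \<open>|u| \<le> min 1 (1/x)\<close>, so the fundamental theorem of calculus gives
  \<open>\<rho>\<close> as a polynomial in \<open>x\<close> on \<open>[0,1]\<close> and a polynomial in \<open>1/x\<close> on \<open>[1,\<infinity>)\<close>; all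
  required estimates are then elementary.
\<close>

definition scale_corr :: "(real \<Rightarrow> real) \<Rightarrow> real \<Rightarrow> real" where
  "scale_corr K x = L2_inner K (\<lambda>u. K (x * u)) / L2_normsq K"

lemma kphi_scale_corr: "kphi K x = 1 + 1 / x - 2 * scale_corr K x"
  unfolding kphi_def scale_corr_def by simp

lemma L2_normsq_eq_inner: "L2_normsq K = L2_inner K K"
  unfolding L2_normsq_def L2_inner_def by (simp add: power2_eq_square)

lemma mono_on_if_deriv_nonneg:
  fixes f f' :: "real \<Rightarrow> real"
  assumes "is_interval S"
    and "\<And>x. x \<in> S \<Longrightarrow> (f has_real_derivative f' x) (at x)"
    and "\<And>x. x \<in> S \<Longrightarrow> 0 \<le> f' x"
  shows "mono_on S f"
proof (rule mono_onI)
  fix x y assume "x \<in> S" "y \<in> S" "x \<le> y"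
  show "f x \<le> f y"
  proof (rule DERIV_nonneg_imp_nondecreasing[OF \<open>x \<le> y\<close>])
    fix t assume "x \<le> t" "t \<le> y"
    with \<open>x \<in> S\<close> \<open>y \<in> S\<close> have "t \<in> S" using assms(1) unfolding is_interval_1 by blast
    with assms(2,3) show "\<exists>y. (f has_real_derivative y) (at t) \<and> 0 \<le> y" by blast
  qed
qed

lemma antimono_on_if_deriv_nonpos:
  fixes f f' :: "real \<Rightarrow> real"
  assumes "is_interval S"
    and "\<And>x. x \<in> S \<Longrightarrow> (f has_real_derivative f' x) (at x)"
    and "\<And>x. x \<in> S \<Longrightarrow> f' x \<le> 0"
  shows "antimono_on S f"
proof (rule monotone_onI)
  fix x y assume "x \<in> S" "y \<in> S" "x \<le> y"
  show "f x \<ge> f y"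
  proof (rule DERIV_nonpos_imp_nonincreasing[OF \<open>x \<le> y\<close>])
    fix t assume "x \<le> t" "t \<le> y"
    with \<open>x \<in> S\<close> \<open>y \<in> S\<close> have "t \<in> S" using assms(1) unfolding is_interval_1 by blast
    with assms(2,3) show "\<exists>y. (f has_real_derivative y) (at t) \<and> y \<le> 0" by blast
  qed
qed

lemma antimono_on_near_0:
  fixes \<rho> \<rho>' :: "real \<Rightarrow> real" and c C :: real
  assumes "0 < c" "0 \<le> C"
    and deriv: "\<And>x. 0 < x \<Longrightarrow> x < 1 \<Longrightarrow> (\<rho> has_real_derivative \<rho>' x) (at x)"
    and lower: "\<And>x. 0 < x \<Longrightarrow> x < 1 \<Longrightarrow> - C \<le> \<rho>' x"
  obtains \<delta> where "0 < \<delta>" "\<delta> \<le> 1" "antimono_on {0<..<\<delta>} (\<lambda>x. c / x - 2 * \<rho> x)"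
proof -
  define \<delta> where "\<delta> = c / (c + 2 * C)"
  have \<delta>: "0 < \<delta>" "\<delta> \<le> 1" using assms(1,2) by (auto simp: \<delta>_def divide_le_eq)
  have "antimono_on {0<..<\<delta>} (\<lambda>x. c / x - 2 * \<rho> x)"
  proof (rule antimono_on_if_deriv_nonpos)
    fix x assume x: "x \<in> {0<..<\<delta>}"
    then have "0 < x" "x < 1" using \<delta> by auto
    then show "((\<lambda>x. c / x - 2 * \<rho> x) has_real_derivative - c / x\<^sup>2 - 2 * \<rho>' x) (at x)"
      using deriv by (auto intro!: derivative_eq_intros simp: power2_eq_square)
    have "0 < c + 2 * C" using assms(1,2) by simp
    with x have "x * (c + 2 * C) < c" by (simp add: \<delta>_def less_divide_eq)
    moreover have "C * x\<^sup>2 \<le> C * x"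
      using \<open>0 < x\<close> \<open>x < 1\<close> assms(2) by (intro mult_left_mono) (auto simp: power2_eq_square)
    moreover have "0 < c * x" using \<open>0 < x\<close> assms(1) by simp
    ultimately have "2 * C * x\<^sup>2 \<le> c"
      by (simp add: algebra_simps)
    then have "2 * C \<le> c / x\<^sup>2"
      using \<open>0 < x\<close> by (simp add: le_divide_eq)
    with lower[OF \<open>0 < x\<close> \<open>x < 1\<close>] show "- c / x\<^sup>2 - 2 * \<rho>' x \<le> 0"
      by simp
  qed simp
  with \<delta> that show thesis by blast
qed

lemma mono_on_atLeast_if_decay:
  fixes \<rho> \<rho>' :: "real \<Rightarrow> real" and a c :: real
  assumes "0 < a" "c \<le> 2"
    and deriv: "\<And>x. a \<le> x \<Longrightarrow> (\<rho> has_real_derivative \<rho>' x) (at x)"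
    and decay: "\<And>x. a \<le> x \<Longrightarrow> x\<^sup>2 * \<rho>' x \<le> -1"
  shows "mono_on {a..} (\<lambda>x. c / x - 2 * \<rho> x)"
proof (rule mono_on_if_deriv_nonneg)
  fix x assume "x \<in> {a..}"
  then have "a \<le> x" "0 < x" using assms(1) by auto
  then show "((\<lambda>x. c / x - 2 * \<rho> x) has_real_derivative - c / x\<^sup>2 - 2 * \<rho>' x) (at x)"
    using deriv by (auto intro!: derivative_eq_intros simp: power2_eq_square)
  have "\<rho>' x \<le> - 1 / x\<^sup>2"
    using decay[OF \<open>a \<le> x\<close>] \<open>0 < x\<close> by (simp add: field_simps)
  moreover have "c / x\<^sup>2 \<le> 2 / x\<^sup>2"
    using assms(2) by (simp add: divide_right_mono)
  ultimately show "0 \<le> - c / x\<^sup>2 - 2 * \<rho>' x"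
    by simp
qed simp

lemma kernel_assumptions_if_scale_corr:
  fixes K \<rho>\<^sub>0 \<rho>\<^sub>0' \<rho>\<^sub>1 \<rho>\<^sub>1' :: "real \<Rightarrow> real" and EH B C :: real
  assumes "1 < EH"
    and "integrable lborel K" "(\<integral>u. \<bar>K u\<bar> \<partial>lborel) = 1" "integrable lborel (\<lambda>u. (K u)\<^sup>2)"
    and small: "\<And>x. 0 \<le> x \<Longrightarrow> x \<le> 1 \<Longrightarrow> scale_corr K x = \<rho>\<^sub>0 x"
    and large: "\<And>x. 1 \<le> x \<Longrightarrow> scale_corr K x = \<rho>\<^sub>1 x"
    and ge_1: "\<And>x. 0 \<le> x \<Longrightarrow> x \<le> 1 \<Longrightarrow> 1 \<le> \<rho>\<^sub>0 x"
    and bound\<^sub>0: "\<And>x. 0 < x \<Longrightarrow> x \<le> 1 \<Longrightarrow> \<rho>\<^sub>0 x \<le> B"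
    and bound\<^sub>1: "\<And>x. 1 \<le> x \<Longrightarrow> \<rho>\<^sub>1 x \<le> B"
    and deriv\<^sub>0: "\<And>x. 0 < x \<Longrightarrow> x < 1 \<Longrightarrow> (\<rho>\<^sub>0 has_real_derivative \<rho>\<^sub>0' x) (at x)"
    and lower\<^sub>0: "\<And>x. 0 < x \<Longrightarrow> x < 1 \<Longrightarrow> - C \<le> \<rho>\<^sub>0' x" and "0 \<le> C"
    and deriv\<^sub>1: "\<And>x. 2 \<le> x \<Longrightarrow> (\<rho>\<^sub>1 has_real_derivative \<rho>\<^sub>1' x) (at x)"
    and decay\<^sub>1: "\<And>x. 2 \<le> x \<Longrightarrow> x\<^sup>2 * \<rho>\<^sub>1' x \<le> -1"
  shows "kernel_assumptions EH K"
proof -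
  have phi\<^sub>0: "kphi K x - \<mu> / x = 1 + ((1 - \<mu>) / x - 2 * \<rho>\<^sub>0 x)" if "0 \<le> x" "x \<le> 1" for x \<mu>
    using small[OF that] by (simp add: kphi_scale_corr diff_divide_distrib)
  have phi\<^sub>1: "kphi K x + \<mu> / x = 1 + ((1 + \<mu>) / x - 2 * \<rho>\<^sub>1 x)" if "1 \<le> x" for x \<mu>
    using large[OF that] by (simp add: kphi_scale_corr add_divide_distrib)
  have "K0 K"
    using assms(2-4) small ge_1 by (simp add: K0_def scale_corr_def)
  moreover have "K1 EH K"
    unfolding K1_def
  proof (intro exI allI impI)
    fix x assume "EH \<le> x"
    with \<open>1 < EH\<close> have "1 \<le> x" by simp
    then have "0 \<le> 1 / x" by simp
    with phi\<^sub>1[OF \<open>1 \<le> x\<close>, of 0, simplified] bound\<^sub>1[OF \<open>1 \<le> x\<close>]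
    show "1 - 2 * B \<le> kphi K x"
      by linarith
  qed
  moreover have "K2 K"
    unfolding K2_def
  proof (intro allI impI conjI)
    fix \<mu> :: real assume \<mu>: "0 < \<mu> \<and> \<mu> < 1"
    have "filterlim (\<lambda>x. (1 - 2 * B) + (1 - \<mu>) * inverse x) at_top (at_right 0)"
      using \<mu> by (intro filterlim_tendsto_add_at_top filterlim_tendsto_pos_mult_at_top
          filterlim_inverse_at_top_right tendsto_const) auto
    moreover have "eventually (\<lambda>x. (1 - 2 * B) + (1 - \<mu>) * inverse x \<le> kphi K x - \<mu> / x) (at_right 0)"
      unfolding eventually_at_right_field
      using phi\<^sub>0 bound\<^sub>0 by (intro exI[of _ 1]) (auto simp: divide_inverse)
    ultimately show "filterlim (\<lambda>x. kphi K x - \<mu> / x) at_top (at_right 0)"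
      by (rule filterlim_at_top_mono)
    obtain \<delta> where "0 < \<delta>" "\<delta> \<le> 1" and anti: "antimono_on {0<..<\<delta>} (\<lambda>x. (1 - \<mu>) / x - 2 * \<rho>\<^sub>0 x)"
      using antimono_on_near_0[of "1 - \<mu>" C] \<mu> \<open>0 \<le> C\<close> deriv\<^sub>0 lower\<^sub>0 by auto
    have "antimono_on {0<..<\<delta>} (\<lambda>x. kphi K x - \<mu> / x)"
      using anti \<open>\<delta> \<le> 1\<close> by (auto simp: monotone_on_def phi\<^sub>0)
    with \<open>0 < \<delta>\<close> show "\<exists>\<delta>>0. antimono_on {0<..<\<delta>} (\<lambda>x. kphi K x - \<mu> / x)" by blast
  qed
  moreover have "K3 K"
    unfolding K3_def
  proof (intro allI impI)
    fix \<mu> :: real assume "0 < \<mu> \<and> \<mu> < 1"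
    then have "mono_on {2..} (\<lambda>x. (1 + \<mu>) / x - 2 * \<rho>\<^sub>1 x)"
      using deriv\<^sub>1 decay\<^sub>1 by (intro mono_on_atLeast_if_decay[where \<rho>' = \<rho>\<^sub>1']) auto
    then show "mono_on {2..} (\<lambda>x. kphi K x + \<mu> / x)"
      by (auto simp: monotone_on_def phi\<^sub>1)
  qed
  ultimately show ?thesis
    unfolding kernel_assumptions_def by blast
qed

lemma indicator_Icc_scaled_le_1:
  fixes x u :: real
  assumes "0 \<le> x" "x \<le> 1"
  shows "indicator {-1..1} u * indicator {-1..1} (x * u) = (indicator {-1..1} u :: real)"
proof (cases "u \<in> {-1..1}")
  case True
  with assms have "\<bar>x * u\<bar> \<le> 1" by (auto simp: abs_mult intro!: mult_le_one)
  with True show ?thesis by (auto simp: indicator_def abs_le_iff)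
qed (simp add: indicator_def)

lemma indicator_Icc_scaled_ge_1:
  fixes x u :: real
  assumes "1 \<le> x"
  shows "indicator {-1..1} u * indicator {-1..1} (x * u) = (indicator {-1/x..1/x} u :: real)"
proof -
  have "0 < x" using assms by simp
  then have "x * u \<in> {-1..1} \<longleftrightarrow> u \<in> {-1/x..1/x}"
    by (auto simp: minus_le_iff pos_divide_le_eq pos_le_divide_eq mult.commute)
  moreover have "u \<in> {-1..1}" if "u \<in> {-1/x..1/x}"
    using assms that order_trans[of u "1/x" 1] order_trans[of "-1" "-1/x" u] by (auto simp: divide_le_eq)
  ultimately show ?thesis by (auto simp: indicator_def simp del: atLeastAtMost_iff)
qed

lemma L2_inner_truncated:
  fixes p :: "real \<Rightarrow> real" and F :: "real \<Rightarrow> real \<Rightarrow> real" and a x :: real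
  assumes cont: "continuous_on UNIV p"
    and F: "\<And>u. (F x has_real_derivative p u * p (x * u)) (at u)"
    and "0 \<le> a"
    and supp: "\<And>u. indicator {-1..1} u * indicator {-1..1} (x * u) = (indicator {-a..a} u :: real)"
  shows "L2_inner (\<lambda>u. p u * indicator {-1..1} u) (\<lambda>u. p (x * u) * indicator {-1..1} (x * u))
    = F x a - F x (-a)"
proof -
  have "L2_inner (\<lambda>u. p u * indicator {-1..1} u) (\<lambda>u. p (x * u) * indicator {-1..1} (x * u))
      = (\<integral>u. p u * p (x * u) * indicator {-a..a} u \<partial>lborel)"
    unfolding L2_inner_def by (rule Bochner_Integration.integral_cong) (simp_all add: supp[symmetric] ac_simps)
  also have "\<dots> = F x a - F x (-a)"
  proof (rule integral_FTC_Icc_real)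
    have "continuous_on UNIV (\<lambda>u. p u * p (x * u))"
      by (intro continuous_intros continuous_on_compose2[OF cont]) auto
    then show "isCont (\<lambda>u. p u * p (x * u)) u" for u
      by (simp add: continuous_on_eq_continuous_at)
  qed (use \<open>0 \<le> a\<close> F in auto)
  finally show ?thesis .
qed

lemma scale_corr_truncated_le_1:
  fixes p :: "real \<Rightarrow> real" and F :: "real \<Rightarrow> real \<Rightarrow> real" and x :: real
  assumes "continuous_on UNIV p" "\<And>x u. (F x has_real_derivative p u * p (x * u)) (at u)"
    and "0 \<le> x" "x \<le> 1"
  shows "scale_corr (\<lambda>u. p u * indicator {-1..1} u) x = (F x 1 - F x (-1)) / (F 1 1 - F 1 (-1))"
proof -
  have "L2_inner (\<lambda>u. p u * indicator {-1..1} u) (\<lambda>u. p (y * u) * indicator {-1..1} (y * u))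
      = F y 1 - F y (-1)" if "0 \<le> y" "y \<le> 1" for y
    using assms(1,2) indicator_Icc_scaled_le_1[OF that] by (intro L2_inner_truncated) auto
  from this[of x] this[of 1] assms(3,4) show ?thesis
    by (simp add: scale_corr_def L2_normsq_eq_inner)
qed

lemma scale_corr_truncated_ge_1:
  fixes p :: "real \<Rightarrow> real" and F :: "real \<Rightarrow> real \<Rightarrow> real" and x :: real
  assumes "continuous_on UNIV p" "\<And>x u. (F x has_real_derivative p u * p (x * u)) (at u)"
    and "1 \<le> x"
  shows "scale_corr (\<lambda>u. p u * indicator {-1..1} u) x = (F x (1/x) - F x (-1/x)) / (F 1 1 - F 1 (-1))"
proof -
  have "L2_inner (\<lambda>u. p u * indicator {-1..1} u) (\<lambda>u. p (y * u) * indicator {-1..1} (y * u))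
      = F y (1/y) - F y (-(1/y))" if "1 \<le> y" for y
    using assms(1,2) indicator_Icc_scaled_ge_1[OF that] that
    by (intro L2_inner_truncated[where F = F and a = "1/y"]) auto
  from this[of x] this[of 1] assms(3) show ?thesis
    by (simp add: scale_corr_def L2_normsq_eq_inner)
qed

lemma truncated_kernel_integrable:
  fixes p :: "real \<Rightarrow> real"
  assumes "continuous_on {-1..1} p"
  shows "integrable lborel (\<lambda>u. p u * indicator {-1..1} u)"
    and "integrable lborel (\<lambda>u. (p u * indicator {-1..1} u)\<^sup>2)"
proof -
  have "integrable lborel (\<lambda>u. indicator {-1..1} u *\<^sub>R p u)"
    using assms by (rule borel_integrable_compact[OF compact_Icc])
  then show "integrable lborel (\<lambda>u. p u * indicator {-1..1} u)"
    by (simp add: mult.commute)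
  have "integrable lborel (\<lambda>u. indicator {-1..1} u *\<^sub>R (p u)\<^sup>2)"
    using assms by (intro borel_integrable_compact[OF compact_Icc] continuous_intros)
  moreover have "(\<lambda>u. indicator {-1..1} u *\<^sub>R (p u)\<^sup>2) = (\<lambda>u. (p u * indicator {-1..1} u)\<^sup>2)"
    by (auto simp: indicator_def)
  ultimately show "integrable lborel (\<lambda>u. (p u * indicator {-1..1} u)\<^sup>2)"
    by simp
qed

lemma truncated_kernel_L1_norm:
  fixes p P :: "real \<Rightarrow> real"
  assumes "continuous_on UNIV p" "\<And>u. (P has_real_derivative p u) (at u)"
    and "\<And>u. -1 \<le> u \<Longrightarrow> u \<le> 1 \<Longrightarrow> 0 \<le> p u"
  shows "(\<integral>u. \<bar>p u * indicator {-1..1} u\<bar> \<partial>lborel) = P 1 - P (-1)"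
proof -
  have "(\<lambda>u. \<bar>p u * indicator {-1..1} u\<bar>) = (\<lambda>u. p u * indicator {-1..1} u)"
    using assms(3) by (auto simp: indicator_def)
  moreover have "(\<integral>u. p u * indicator {-1..1} u \<partial>lborel) = P 1 - P (-1)"
    using assms(1,2) by (intro integral_FTC_Icc_real) (auto simp: continuous_on_eq_continuous_at)
  ultimately show ?thesis by simp
qed

definition epanechnikov_kernel :: "real \<Rightarrow> real" where
  "epanechnikov_kernel x = (3/4) * (1 - x\<^sup>2) * indicator {-1..1} x"

lemma kernel_assumptions_epanechnikov:
  assumes "1 < EH"
  shows "kernel_assumptions EH epanechnikov_kernel"
proof -
  define p :: "real \<Rightarrow> real" where "p u = (3/4) * (1 - u\<^sup>2)" for u
  define F :: "real \<Rightarrow> real \<Rightarrow> real"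
    where "F x u = 9/16 * u - 3/16 * (1 + x\<^sup>2) * u^3 + 9/80 * x\<^sup>2 * u^5" for x u
  have K: "epanechnikov_kernel = (\<lambda>u. p u * indicator {-1..1} u)"
    by (simp add: fun_eq_iff epanechnikov_kernel_def p_def)
  have cont: "continuous_on UNIV p"
    unfolding p_def by (intro continuous_intros)
  have F: "(F x has_real_derivative p u * p (x * u)) (at u)" for x u
    unfolding F_def p_def
    by (auto intro!: derivative_eq_intros simp: field_simps power2_eq_square eval_nat_numeral)
  have P: "((\<lambda>u. 3/4 * u - 1/4 * u^3) has_real_derivative p u) (at u)" for u
    unfolding p_def by (auto intro!: derivative_eq_intros simp: field_simps power2_eq_square)
  have nonneg: "0 \<le> p u" if "-1 \<le> u" "u \<le> 1" for u
    using that by (simp add: p_def abs_square_le_1)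
  have L1: "(\<integral>u. \<bar>p u * indicator {-1..1} u\<bar> \<partial>lborel) = 1"
    using truncated_kernel_L1_norm[OF cont P nonneg] by simp
  have small: "scale_corr (\<lambda>u. p u * indicator {-1..1} u) x = 5/4 - x\<^sup>2/4" if "0 \<le> x" "x \<le> 1" for x
    using scale_corr_truncated_le_1[OF cont F that] by (simp add: F_def field_simps)
  have large: "scale_corr (\<lambda>u. p u * indicator {-1..1} u) x = 5/(4*x) - 1/(4*x^3)" if "1 \<le> x" for x
  proof -
    have "scale_corr (\<lambda>u. p u * indicator {-1..1} u) x
        = (F x (1/x) - F x (-(1/x))) / (F 1 1 - F 1 (-1))"
      using scale_corr_truncated_ge_1[OF cont F that] by simp
    also have "\<dots> = (3/(4*x) - 3/(20*x^3)) / (3/5)"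
      using that by (simp add: F_def field_simps power2_eq_square eval_nat_numeral)
    also have "\<dots> = 5/(4*x) - 1/(4*x^3)"
      by (simp add: field_simps)
    finally show ?thesis .
  qed
  show ?thesis
    unfolding K
  proof (rule kernel_assumptions_if_scale_corr[OF assms _ L1 _ small large,
        where \<rho>\<^sub>0' = "\<lambda>x. - x/2" and \<rho>\<^sub>1' = "\<lambda>x. (3/x\<^sup>2 - 5) / (4*x\<^sup>2)" and B = 2 and C = 1])
    show "integrable lborel (\<lambda>u. p u * indicator {-1..1} u)"
      "integrable lborel (\<lambda>u. (p u * indicator {-1..1} u)\<^sup>2)"
      using cont by (auto intro: truncated_kernel_integrable continuous_on_subset)
    show "1 \<le> 5/4 - x\<^sup>2/4" if "0 \<le> x" "x \<le> 1" for x :: real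
      using that power_le_one[of x 2] by simp
    show "5/4 - x\<^sup>2/4 \<le> 2" for x :: real
      using zero_le_power2[of x] by linarith
    show "5/(4*x) - 1/(4*x^3) \<le> 2" if "1 \<le> x" for x :: real
    proof -
      have "5/(4*x) \<le> 5/4" "0 \<le> 1/(4*x^3)" using that by (auto simp: divide_le_eq)
      then show ?thesis by linarith
    qed
    show "((\<lambda>x. 5/4 - x\<^sup>2/4) has_real_derivative - x/2) (at x)" for x :: real
      by (auto intro!: derivative_eq_intros)
    show "((\<lambda>x. 5/(4*x) - 1/(4*x^3)) has_real_derivative (3/x\<^sup>2 - 5) / (4*x\<^sup>2)) (at x)" if "2 \<le> x" for x :: real
      using that by (auto intro!: derivative_eq_intros simp: field_simps power2_eq_square eval_nat_numeral)
    show "x\<^sup>2 * ((3/x\<^sup>2 - 5) / (4*x\<^sup>2)) \<le> -1" if "2 \<le> x" for x :: real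
    proof -
      have "4 \<le> x\<^sup>2" using that power_mono[of 2 x 2] by simp
      then have "3/x\<^sup>2 \<le> 1" by (simp add: divide_le_eq)
      with that show ?thesis by simp
    qed
  qed auto
qed

definition rectangular_kernel :: "real \<Rightarrow> real" where
  "rectangular_kernel x = indicator {-1..1} x / 2"

lemma kernel_assumptions_rectangular:
  assumes "1 < EH"
  shows "kernel_assumptions EH rectangular_kernel"
proof -
  define p :: "real \<Rightarrow> real" where "p u = 1/2" for u
  define F :: "real \<Rightarrow> real \<Rightarrow> real" where "F x u = u/4" for x u
  have K: "rectangular_kernel = (\<lambda>u. p u * indicator {-1..1} u)"
    by (simp add: fun_eq_iff rectangular_kernel_def p_def)
  have cont: "continuous_on UNIV p"
    unfolding p_def by (intro continuous_intros)
  have F: "(F x has_real_derivative p u * p (x * u)) (at u)" for x u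
    unfolding F_def p_def by (auto intro!: derivative_eq_intros)
  have P: "((\<lambda>u. u/2) has_real_derivative p u) (at u)" for u
    unfolding p_def by (auto intro!: derivative_eq_intros)
  have L1: "(\<integral>u. \<bar>p u * indicator {-1..1} u\<bar> \<partial>lborel) = 1"
    using truncated_kernel_L1_norm[OF cont P] by (simp add: p_def)
  have small: "scale_corr (\<lambda>u. p u * indicator {-1..1} u) x = 1" if "0 \<le> x" "x \<le> 1" for x
    using scale_corr_truncated_le_1[OF cont F that] by (simp add: F_def)
  have large: "scale_corr (\<lambda>u. p u * indicator {-1..1} u) x = 1/x" if "1 \<le> x" for x
    using scale_corr_truncated_ge_1[OF cont F that] by (simp add: F_def)
  show ?thesis
    unfolding K
  proof (rule kernel_assumptions_if_scale_corr[OF assms _ L1 _ small large,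
        where \<rho>\<^sub>0' = "\<lambda>x. 0" and \<rho>\<^sub>1' = "\<lambda>x. - 1/x\<^sup>2" and B = 2 and C = 0])
    show "integrable lborel (\<lambda>u. p u * indicator {-1..1} u)"
      "integrable lborel (\<lambda>u. (p u * indicator {-1..1} u)\<^sup>2)"
      using cont by (auto intro: truncated_kernel_integrable continuous_on_subset)
    show "1/x \<le> 2" if "1 \<le> x" for x :: real
      using that by (simp add: divide_le_eq)
    show "((\<lambda>x. 1/x) has_real_derivative - 1/x\<^sup>2) (at x)" if "2 \<le> x" for x :: real
      using that by (auto intro!: derivative_eq_intros simp: power2_eq_square)
  qed auto
qed

definition biweight_kernel :: "real \<Rightarrow> real" where
  "biweight_kernel x = (15/16) * (1 - x\<^sup>2)\<^sup>2 * indicator {-1..1} x"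

lemma kernel_assumptions_biweight:
  assumes "1 < EH"
  shows "kernel_assumptions EH biweight_kernel"
proof -
  define p :: "real \<Rightarrow> real" where "p u = (15/16) * (1 - u\<^sup>2)\<^sup>2" for u
  define F :: "real \<Rightarrow> real \<Rightarrow> real"
    where "F x u = 225/256 * (u - (2 + 2*x\<^sup>2)/3 * u^3 + (1 + 4*x\<^sup>2 + x^4)/5 * u^5
      - (2*x\<^sup>2 + 2*x^4)/7 * u^7 + x^4/9 * u^9)" for x u
  have K: "biweight_kernel = (\<lambda>u. p u * indicator {-1..1} u)"
    by (simp add: fun_eq_iff biweight_kernel_def p_def)
  have cont: "continuous_on UNIV p"
    unfolding p_def by (intro continuous_intros)
  have F: "(F x has_real_derivative p u * p (x * u)) (at u)" for x u
    unfolding F_def p_def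
    by (auto intro!: derivative_eq_intros simp: field_simps power2_eq_square eval_nat_numeral)
  have P: "((\<lambda>u. 15/16 * u - 5/8 * u^3 + 3/16 * u^5) has_real_derivative p u) (at u)" for u
    unfolding p_def by (auto intro!: derivative_eq_intros simp: field_simps power2_eq_square eval_nat_numeral)
  have L1: "(\<integral>u. \<bar>p u * indicator {-1..1} u\<bar> \<partial>lborel) = 1"
    using truncated_kernel_L1_norm[OF cont P] by (simp add: p_def)
  have small: "scale_corr (\<lambda>u. p u * indicator {-1..1} u) x = 21/16 - 3*x\<^sup>2/8 + x^4/16"
    if "0 \<le> x" "x \<le> 1" for x
    using scale_corr_truncated_le_1[OF cont F that] by (simp add: F_def field_simps)
  have large: "scale_corr (\<lambda>u. p u * indicator {-1..1} u) x = 21/(16*x) - 3/(8*x^3) + 1/(16*x^5)"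
    if "1 \<le> x" for x
  proof -
    have "scale_corr (\<lambda>u. p u * indicator {-1..1} u) x
        = (F x (1/x) - F x (-(1/x))) / (F 1 1 - F 1 (-1))"
      using scale_corr_truncated_ge_1[OF cont F that] by simp
    also have "\<dots> = (15/(16*x) - 15/(56*x^3) + 5/(112*x^5)) / (5/7)"
      using that by (simp add: F_def field_simps power2_eq_square eval_nat_numeral)
    also have "\<dots> = 21/(16*x) - 3/(8*x^3) + 1/(16*x^5)"
      by (simp add: field_simps)
    finally show ?thesis .
  qed
  show ?thesis
    unfolding K
  proof (rule kernel_assumptions_if_scale_corr[OF assms _ L1 _ small large,
        where \<rho>\<^sub>0' = "\<lambda>x. - 3*x/4 + x^3/4"
        and \<rho>\<^sub>1' = "\<lambda>x. (9/(8*x\<^sup>2) - 5/(16*x^4) - 21/16) / x\<^sup>2" and B = 2 and C = 1])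
    show "integrable lborel (\<lambda>u. p u * indicator {-1..1} u)"
      "integrable lborel (\<lambda>u. (p u * indicator {-1..1} u)\<^sup>2)"
      using cont by (auto intro: truncated_kernel_integrable continuous_on_subset)
    show "1 \<le> 21/16 - 3*x\<^sup>2/8 + x^4/16" if "0 \<le> x" "x \<le> 1" for x :: real
    proof -
      have "0 \<le> (1 - x\<^sup>2) * (5 - x\<^sup>2)"
        using that power_le_one[of x 2] by simp
      then show ?thesis by (simp add: algebra_simps power2_eq_square power4_eq_xxxx)
    qed
    show "21/16 - 3*x\<^sup>2/8 + x^4/16 \<le> 2" if "0 < x" "x \<le> 1" for x :: real
    proof -
      have "x^4 \<le> 1" using that by (simp add: power_le_one)
      then show ?thesis using zero_le_power2[of x] by linarith
    qed
    show "21/(16*x) - 3/(8*x^3) + 1/(16*x^5) \<le> 2" if "1 \<le> x" for x :: real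
    proof -
      have "21/(16*x) \<le> 21/16" "0 \<le> 3/(8*x^3)" "1/(16*x^5) \<le> 1/16"
        using that one_le_power[of x 5] by (auto simp: divide_le_eq)
      then show ?thesis by linarith
    qed
    show "((\<lambda>x. 21/16 - 3*x\<^sup>2/8 + x^4/16) has_real_derivative - 3*x/4 + x^3/4) (at x)" for x :: real
      by (auto intro!: derivative_eq_intros simp: field_simps eval_nat_numeral)
    show "- 1 \<le> - 3*x/4 + x^3/4" if "0 < x" "x < 1" for x :: real
      using that zero_le_power[of x 3] by linarith
    show "((\<lambda>x. 21/(16*x) - 3/(8*x^3) + 1/(16*x^5)) has_real_derivative
        (9/(8*x\<^sup>2) - 5/(16*x^4) - 21/16) / x\<^sup>2) (at x)" if "2 \<le> x" for x :: real
      using that by (auto intro!: derivative_eq_intros simp: field_simps power2_eq_square eval_nat_numeral)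
    show "x\<^sup>2 * ((9/(8*x\<^sup>2) - 5/(16*x^4) - 21/16) / x\<^sup>2) \<le> -1" if "2 \<le> x" for x :: real
    proof -
      have "4 \<le> x\<^sup>2" using that power_mono[of 2 x 2] by simp
      then have "9/(8*x\<^sup>2) \<le> 5/16" by (simp add: divide_le_eq)
      moreover have "0 \<le> 5/(16*x^4)" by simp
      ultimately have "9/(8*x\<^sup>2) - 5/(16*x^4) - 21/16 \<le> -1" by linarith
      with that show ?thesis by simp
    qed
  qed auto
qed

lemma has_bochner_integral_gaussian:
  fixes c :: real
  assumes "0 < c"
  shows "has_bochner_integral lborel (\<lambda>u. exp (- (c * u\<^sup>2) / 2)) (sqrt (2 * pi / c))"
proof -
  have \<sigma>: "0 < 1 / sqrt c" using assms by simp
  have "exp (- (c * u\<^sup>2) / 2) = sqrt (2 * pi / c) * normal_density 0 (1 / sqrt c) u" for u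
    using assms by (simp add: normal_density_def power_divide real_sqrt_divide field_simps)
  moreover have "has_bochner_integral lborel (\<lambda>u. sqrt (2 * pi / c) * normal_density 0 (1 / sqrt c) u)
      (sqrt (2 * pi / c) * 1)"
    using integrable_normal_density[OF \<sigma>] integral_normal_density[OF \<sigma>]
    by (intro has_bochner_integral_mult_right) (simp add: has_bochner_integral_iff)
  ultimately show ?thesis by simp
qed

definition gaussian_kernel :: "real \<Rightarrow> real" where
  "gaussian_kernel x = exp (- (x\<^sup>2) / 2) / sqrt (2 * pi)"

lemma gaussian_kernel_mult_scaled:
  "gaussian_kernel u * gaussian_kernel (x * u) = exp (- ((1 + x\<^sup>2) * u\<^sup>2) / 2) / (2 * pi)"
proof -
  have "exp (- (u\<^sup>2) / 2) * exp (- ((x * u)\<^sup>2) / 2) = exp (- ((1 + x\<^sup>2) * u\<^sup>2) / 2)"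
    by (simp add: exp_add[symmetric] field_simps power_mult_distrib)
  then show ?thesis
    by (simp add: gaussian_kernel_def)
qed

lemma scale_corr_gaussian: "scale_corr gaussian_kernel x = sqrt 2 / sqrt (1 + x\<^sup>2)"
proof -
  have inner: "L2_inner gaussian_kernel (\<lambda>u. gaussian_kernel (y * u)) = sqrt (2 * pi / (1 + y\<^sup>2)) / (2 * pi)"
    for y :: real
    using has_bochner_integral_gaussian[of "1 + y\<^sup>2"]
    by (simp add: L2_inner_def gaussian_kernel_mult_scaled has_bochner_integral_iff add_pos_nonneg)
  have "sqrt (2 * pi / (1 + x\<^sup>2)) / sqrt (2 * pi / 2) = sqrt 2 / sqrt (1 + x\<^sup>2)"
    by (simp add: real_sqrt_divide real_sqrt_mult)
  with inner[of x] inner[of 1] show ?thesis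
    by (simp add: scale_corr_def L2_normsq_eq_inner)
qed

lemma kernel_assumptions_gaussian:
  assumes "1 < EH"
  shows "kernel_assumptions EH gaussian_kernel"
proof -
  define \<rho> :: "real \<Rightarrow> real" where "\<rho> x = sqrt 2 / sqrt (1 + x\<^sup>2)" for x
  define \<rho>' :: "real \<Rightarrow> real" where "\<rho>' x = - sqrt 2 * x / ((1 + x\<^sup>2) * sqrt (1 + x\<^sup>2))" for x
  have pos: "0 < 1 + x\<^sup>2" "1 \<le> sqrt (1 + x\<^sup>2)" for x :: real
    by (simp_all add: add_pos_nonneg)
  have sqrt_2: "sqrt 2 \<le> (3/2 :: real)"
    by (rule real_le_lsqrt) (auto simp: power2_eq_square)
  show ?thesis
  proof (rule kernel_assumptions_if_scale_corr[OF assms, where \<rho>\<^sub>0 = \<rho> and \<rho>\<^sub>1 = \<rho>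
        and \<rho>\<^sub>0' = \<rho>' and \<rho>\<^sub>1' = \<rho>' and B = 2 and C = 2])
    have "has_bochner_integral lborel gaussian_kernel 1"
      using has_bochner_integral_divide_zero[OF has_bochner_integral_gaussian[of 1], of "sqrt (2 * pi)"]
      by (simp add: gaussian_kernel_def[abs_def])
    moreover have "(\<lambda>u. \<bar>gaussian_kernel u\<bar>) = gaussian_kernel"
      by (simp add: fun_eq_iff gaussian_kernel_def)
    ultimately show "integrable lborel gaussian_kernel" "(\<integral>u. \<bar>gaussian_kernel u\<bar> \<partial>lborel) = 1"
      by (simp_all add: has_bochner_integral_iff)
    have "(\<lambda>u. (gaussian_kernel u)\<^sup>2) = (\<lambda>u. exp (- (2 * u\<^sup>2) / 2) / (2 * pi))"
      using gaussian_kernel_mult_scaled[of _ 1] by (simp add: power2_eq_square fun_eq_iff)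
    moreover have "integrable lborel (\<lambda>u::real. exp (- (2 * u\<^sup>2) / 2))"
      using has_bochner_integral_gaussian[of 2] by (simp add: has_bochner_integral_iff)
    ultimately show "integrable lborel (\<lambda>u. (gaussian_kernel u)\<^sup>2)"
      by simp
    show "scale_corr gaussian_kernel x = \<rho> x" "scale_corr gaussian_kernel x = \<rho> x" for x
      by (simp_all add: \<rho>_def scale_corr_gaussian)
    show "1 \<le> \<rho> x" if "0 \<le> x" "x \<le> 1" for x
      using that power_le_one[of x 2] pos[of x] by (simp add: \<rho>_def le_divide_eq)
    have "\<rho> x \<le> 2" for x
    proof -
      have "\<rho> x \<le> sqrt 2" using pos[of x] by (simp add: \<rho>_def divide_le_eq)
      with sqrt_2 show ?thesis by simp
    qed
    then show "\<rho> x \<le> 2" "\<rho> x \<le> 2" for x by simp_all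
    show "(\<rho> has_real_derivative \<rho>' x) (at x)" "(\<rho> has_real_derivative \<rho>' x) (at x)" for x
      using pos[of x] unfolding \<rho>_def \<rho>'_def
      by (auto intro!: derivative_eq_intros simp: field_simps power2_eq_square)
    show "- 2 \<le> \<rho>' x" if "0 < x" "x < 1" for x
    proof -
      have "sqrt 2 * x / ((1 + x\<^sup>2) * sqrt (1 + x\<^sup>2)) \<le> sqrt 2 * x"
        using that pos[of x] mult_mono[of 1 "1 + x\<^sup>2" 1 "sqrt (1 + x\<^sup>2)"]
        by (intro divide_left_mono[of 1, simplified]) auto
      also have "\<dots> \<le> sqrt 2" using that by (simp add: mult_left_le)
      also have "\<dots> \<le> 2" using sqrt_2 by simp
      finally show ?thesis by (simp add: \<rho>'_def)
    qed
    show "x\<^sup>2 * \<rho>' x \<le> -1" if "2 \<le> x" for x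
    proof -
      have "4 \<le> x\<^sup>2" using that power_mono[of 2 x 2] by simp
      have "((1 + x\<^sup>2) * sqrt (1 + x\<^sup>2))\<^sup>2 = (1 + x\<^sup>2) ^ 3"
        using pos[of x] by (simp add: power_mult_distrib power3_eq_cube power2_eq_square)
      also have "\<dots> \<le> (5/4 * x\<^sup>2) ^ 3"
        using \<open>4 \<le> x\<^sup>2\<close> by (intro power_mono) auto
      also have "\<dots> = 125/64 * (x ^ 3)\<^sup>2"
        by (simp add: power_mult_distrib power_divide flip: power_mult)
      also have "\<dots> \<le> (sqrt 2 * x ^ 3)\<^sup>2"
        by (simp add: power_mult_distrib)
      finally have "(1 + x\<^sup>2) * sqrt (1 + x\<^sup>2) \<le> sqrt 2 * x ^ 3"
        by (rule power2_le_imp_le) (use that in auto)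
      then show ?thesis
        using pos[of x] by (simp add: \<rho>'_def divide_le_eq power2_eq_square power3_eq_cube mult_ac)
    qed
  qed simp
qed

theorem lemma4:
  fixes EH :: real
  assumes "EH > 1"
  shows "kernel_assumptions EH (\<lambda>x. exp (- (x\<^sup>2) / 2) / sqrt (2 * pi))
    \<and> kernel_assumptions EH (\<lambda>x. indicator {-1..1} x / 2)
    \<and> kernel_assumptions EH (\<lambda>x. (3/4) * (1 - x\<^sup>2) * indicator {-1..1} x)
    \<and> kernel_assumptions EH (\<lambda>x. (15/16) * (1 - x\<^sup>2)\<^sup>2 * indicator {-1..1} x)"
  using kernel_assumptions_gaussian[OF assms] kernel_assumptions_rectangular[OF assms]
    kernel_assumptions_epanechnikov[OF assms] kernel_assumptions_biweight[OF assms]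
  unfolding gaussian_kernel_def[abs_def] rectangular_kernel_def[abs_def]
    epanechnikov_kernel_def[abs_def] biweight_kernel_def[abs_def]
  by blast

end
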